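(* Let $T$ be a triangle which is not of type $(108^\circ,36^\circ,36^\circ)$, $(72^\circ,72^\circ,36^\circ)$ or $(120^\circ,30^\circ,30^\circ)$. Then the tight 5-cycle $C_5$ with vertex set $[5]$ and edges $123,234,345,145,125$ is forbidden for $T$.
   Context: A 3-graph is a 3-uniform hypergraph; $G$ is $F$-free if it has no (not necessarily induced) subhypergraph isomorphic to $F$. A triangle is of type $(\alpha,\beta,\gamma)$ if $\alpha\ge\beta\ge\gamma$ are its interior angles in degrees. For a triangle $T$ with side lengths $a,b,c$ and $\varepsilon>0$, with $\varepsilon'=\varepsilon\min\{a,b,c\}$, a triangle $A'B'C'$ is $\varepsilon$-congruent to $T$ if there are $A,B,C\in\mathbb{R}^2$ with $ABC$ congruent to $T$ and $A',B',C'$ within distance $\varepsilon'$ of $A,B,C$ respectively. For finite $P\subseteq\mathbb{R}^2$, $\mathcal{H}(T,P,\varepsilon)$ is the 3-graph on $P$ whose edges are triples forming triangles $\varepsilon$-congruent to $T$. A 3-graph $H$ is forbidden for $T$ if there exists $\varepsilon>0$ such that for every $P\subseteq\mathbb{R}^2$ with $|P|=|V(H)|$, $\mathcal{H}(T,P,\varepsilon)$ is $H$-free. *)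

theory Defs
  imports "HOL-Analysis.Analysis" "HOL-Library.Multiset"
begin

type_synonym pt = "real ^ 2"

type_synonym triangle = "pt \<times> pt \<times> pt"

definition is_triangle :: "triangle \<Rightarrow> bool" where
  "is_triangle T = (case T of (A, B, C) \<Rightarrow> \<not> collinear {A, B, C})"

definition angle_deg :: "pt \<Rightarrow> pt \<Rightarrow> pt \<Rightarrow> real" where
  "angle_deg A B C =
     arccos (((A - B) \<bullet> (C - B)) / (norm (A - B) * norm (C - B))) * 180 / pi"

definition tri_type :: "triangle \<Rightarrow> real \<Rightarrow> real \<Rightarrow> real \<Rightarrow> bool" where
  "tri_type T \<alpha> \<beta> \<gamma> = (case T of (A, B, C) \<Rightarrow>
     {# angle_deg C A B, angle_deg A B C, angle_deg B C A #} = {# \<alpha>, \<beta>, \<gamma> #})"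

definition min_side :: "triangle \<Rightarrow> real" where
  "min_side T = (case T of (A, B, C) \<Rightarrow> min (dist B C) (min (dist C A) (dist A B)))"

definition congruent :: "pt \<Rightarrow> pt \<Rightarrow> pt \<Rightarrow> triangle \<Rightarrow> bool" where
  "congruent A B C T = (case T of (X, Y, Z) \<Rightarrow>
     \<exists>f :: pt \<Rightarrow> pt. (\<forall>u v. dist (f u) (f v) = dist u v) \<and> {f X, f Y, f Z} = {A, B, C})"

definition eps_congruent :: "triangle \<Rightarrow> real \<Rightarrow> pt \<Rightarrow> pt \<Rightarrow> pt \<Rightarrow> bool" where
  "eps_congruent T \<epsilon> A' B' C' =
     (\<exists>A B C. congruent A B C T \<and>
        dist A' A \<le> \<epsilon> * min_side T \<and> dist B' B \<le> \<epsilon> * min_side T \<and>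
        dist C' C \<le> \<epsilon> * min_side T)"

definition HTP :: "triangle \<Rightarrow> pt set \<Rightarrow> real \<Rightarrow> pt set set" where
  "HTP T P \<epsilon> = {e. e \<subseteq> P \<and> card e = 3 \<and>
      (\<exists>x y z. e = {x, y, z} \<and> eps_congruent T \<epsilon> x y z)}"

definition contains_copy :: "'a set \<Rightarrow> 'a set set \<Rightarrow> 'b set \<Rightarrow> 'b set set \<Rightarrow> bool" where
  "contains_copy VH EH VG EG =
     (\<exists>f. inj_on f VH \<and> f ` VH \<subseteq> VG \<and> (\<forall>e\<in>EH. f ` e \<in> EG))"

definition forbidden_for :: "'a set \<Rightarrow> 'a set set \<Rightarrow> triangle \<Rightarrow> bool" where
  "forbidden_for VH EH T =
     (\<exists>\<epsilon>>0. \<forall>P :: pt set. finite P \<and> card P = card VH \<longrightarrow>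
        \<not> contains_copy VH EH P (HTP T P \<epsilon>))"

definition C5_vertices :: "nat set" where
  "C5_vertices = {1, 2, 3, 4, 5}"

definition C5_edges :: "nat set set" where
  "C5_edges = {{1,2,3}, {2,3,4}, {3,4,5}, {1,4,5}, {1,2,5}}"

end

theory Submission
  imports Defs
begin

text \<open>
  If \<open>\<epsilon>\<close> is small, an \<open>\<epsilon>\<close>-approximate tight 5-cycle is close to an exact one: after
  moving its first vertex to the origin it lies in a compact set, on which the continuous
  defect \<open>C5_defect\<close> attains its minimum. So it suffices that there are no five points
  \<open>P\<^sub>0, \<dots>, P\<^sub>4\<close> in the plane such that each cyclically consecutive triple
  \<open>P\<^sub>i P\<^sub>i\<^sub>+\<^sub>1 P\<^sub>i\<^sub>+\<^sub>2\<close> has side lengths \<open>a, b, c\<close>. Such a configuration is excluded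
  by the vanishing of the Cayley--Menger determinants of its four-point subsets, except when
  the triangle is isosceles with legs \<open>l\<close> and base \<open>k\<close>, \<open>k\<^sup>4 - 3 k\<^sup>2 l\<^sup>2 + l\<^sup>4 = 0\<close>:
  then \<open>k / l\<close> is the golden ratio or its inverse (the regular pentagon), and the triangle
  has type (108, 36, 36) or (72, 72, 36).
\<close>

section \<open>The Cayley--Menger determinant\<close>

text \<open>The Cayley--Menger determinant of four points, in terms of their squared distances
  \<open>d\<^sub>i\<^sub>j\<close>: it is \<open>288\<close> times the squared volume of the tetrahedron, so it vanishes for
  coplanar points.\<close>

definition cayley_menger :: "real \<Rightarrow> real \<Rightarrow> real \<Rightarrow> real \<Rightarrow> real \<Rightarrow> real \<Rightarrow> real" where
  "cayley_menger d01 d02 d03 d12 d13 d23 =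
     - 2 * d12 * d13 * d23 + 2 * d03 * d12 * d23 + 2 * d03 * d12 * d13 - 2 * d03 * d12^2
     - 2 * d03^2 * d12 + 2 * d02 * d13 * d23 - 2 * d02 * d13^2 + 2 * d02 * d12 * d13
     - 2 * d02 * d03 * d23 + 2 * d02 * d03 * d13 + 2 * d02 * d03 * d12 - 2 * d02^2 * d13
     - 2 * d01 * d23^2 + 2 * d01 * d13 * d23 + 2 * d01 * d12 * d23 + 2 * d01 * d03 * d23
     - 2 * d01 * d03 * d13 + 2 * d01 * d03 * d12 + 2 * d01 * d02 * d23 + 2 * d01 * d02 * d13
     - 2 * d01 * d02 * d12 - 2 * d01^2 * d23"

lemma dist_vec2_squared: "(dist (x::real^2) y)\<^sup>2 = (x$1 - y$1)\<^sup>2 + (x$2 - y$2)\<^sup>2"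
  by (simp add: dist_vec_def L2_set_def sum_2 dist_real_def)

lemma cayley_menger_planar:
  fixes P0 P1 P2 P3 :: "real^2"
  shows "cayley_menger ((dist P0 P1)\<^sup>2) ((dist P0 P2)\<^sup>2) ((dist P0 P3)\<^sup>2)
           ((dist P1 P2)\<^sup>2) ((dist P1 P3)\<^sup>2) ((dist P2 P3)\<^sup>2) = 0"
  unfolding dist_vec2_squared cayley_menger_def by algebra

lemma no_planar_equidistant_four_points:
  fixes P0 P1 P2 P3 :: "real^2"
  assumes "dist P0 P1 = a" "dist P0 P2 = a" "dist P0 P3 = a" "dist P1 P2 = a" "dist P1 P3 = a"
    "dist P2 P3 = a" and "a > 0"
  shows False
proof -
  have "cayley_menger (a\<^sup>2) (a\<^sup>2) (a\<^sup>2) (a\<^sup>2) (a\<^sup>2) (a\<^sup>2) = 0"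
    using cayley_menger_planar[of P0 P1 P2 P3] assms by simp
  then have "4 * (a\<^sup>2)^3 = 0" unfolding cayley_menger_def by algebra
  with \<open>a > 0\<close> show False by simp
qed

section \<open>Exact realisations of the tight 5-cycle\<close>

definition perm3 :: "real \<Rightarrow> real \<Rightarrow> real \<Rightarrow> real \<Rightarrow> real \<Rightarrow> real \<Rightarrow> bool" where
  "perm3 x y z a b c \<longleftrightarrow>
     (x = a \<and> y = b \<and> z = c) \<or> (x = a \<and> y = c \<and> z = b) \<or> (x = b \<and> y = a \<and> z = c) \<or>
     (x = b \<and> y = c \<and> z = a) \<or> (x = c \<and> y = a \<and> z = b) \<or> (x = c \<and> y = b \<and> z = a)"

lemma perm3_trans_iff: "perm3 a' b' c' a b c \<Longrightarrow> perm3 x y z a' b' c' \<longleftrightarrow> perm3 x y z a b c"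
  unfolding perm3_def by auto

lemma perm3_isosceles_iff:
  "l \<noteq> k \<Longrightarrow> perm3 x y z l l k \<longleftrightarrow>
     (x = k \<and> y = l \<and> z = l) \<or> (x = l \<and> y = k \<and> z = l) \<or> (x = l \<and> y = l \<and> z = k)"
  unfolding perm3_def by auto

definition has_sides :: "'a::metric_space \<Rightarrow> 'a \<Rightarrow> 'a \<Rightarrow> real \<Rightarrow> real \<Rightarrow> real \<Rightarrow> bool" where
  "has_sides P Q R a b c \<longleftrightarrow> perm3 (dist Q R) (dist R P) (dist P Q) a b c"

text \<open>The edges \<open>123, 234, 345, 145, 125\<close> of \<open>C\<^sub>5\<close> are the cyclically consecutive triples.\<close>

definition C5_realisation ::
    "real \<Rightarrow> real \<Rightarrow> real \<Rightarrow> 'a::metric_space \<Rightarrow> 'a \<Rightarrow> 'a \<Rightarrow> 'a \<Rightarrow> 'a \<Rightarrow> bool" where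
  "C5_realisation a b c P0 P1 P2 P3 P4 \<longleftrightarrow>
     has_sides P0 P1 P2 a b c \<and> has_sides P1 P2 P3 a b c \<and> has_sides P2 P3 P4 a b c \<and>
     has_sides P3 P4 P0 a b c \<and> has_sides P4 P0 P1 a b c"

lemma C5_realisationD:
  assumes "C5_realisation a b c P0 P1 P2 P3 P4"
  shows "has_sides P0 P1 P2 a b c" "has_sides P1 P2 P3 a b c" "has_sides P2 P3 P4 a b c"
    "has_sides P3 P4 P0 a b c" "has_sides P4 P0 P1 a b c"
  using assms unfolding C5_realisation_def by blast+

lemma C5_realisation_rotate:
  "C5_realisation a b c P0 P1 P2 P3 P4 \<Longrightarrow> C5_realisation a b c P1 P2 P3 P4 P0"
  unfolding C5_realisation_def by blast

lemma C5_realisation_perm3: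
  "perm3 a' b' c' a b c \<Longrightarrow>
     C5_realisation a' b' c' P0 P1 P2 P3 P4 \<longleftrightarrow> C5_realisation a b c P0 P1 P2 P3 P4"
  unfolding C5_realisation_def has_sides_def by (simp add: perm3_trans_iff)

text \<open>Any four of the five points are cyclically consecutive, so the rotations of this
  instance cover all four-point subsets; its entries are pentagon sides \<open>dist P\<^sub>i P\<^sub>i\<^sub>+\<^sub>1\<close> and
  diagonals \<open>dist P\<^sub>i\<^sub>+\<^sub>2 P\<^sub>i\<close>, oriented as in \<open>has_sides\<close>.\<close>

lemma pentagon_cayley_menger:
  fixes P0 P1 P2 P3 :: "real^2"
  shows "cayley_menger ((dist P0 P1)\<^sup>2) ((dist P2 P0)\<^sup>2) ((dist P0 P3)\<^sup>2)
           ((dist P1 P2)\<^sup>2) ((dist P3 P1)\<^sup>2) ((dist P2 P3)\<^sup>2) = 0"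
  using cayley_menger_planar[of P0 P1 P2 P3] by (simp add: dist_commute)

lemma C5_realisation_isosceles_one_base_side:
  fixes P0 P1 P2 P3 P4 :: "real^2"
  assumes R: "C5_realisation l l k P0 P1 P2 P3 P4" and "l \<noteq> k" "l > 0" "k > 0"
    and x: "dist P0 P1 = k" "dist P1 P2 = l" "dist P2 P3 = l" "dist P3 P4 = l" "dist P4 P0 = l"
  shows False
proof -
  note triple = C5_realisationD[OF R, unfolded has_sides_def perm3_isosceles_iff[OF \<open>l \<noteq> k\<close>]]
  have "dist P2 P0 = l" "dist P3 P1 = k" "dist P4 P2 = k" "dist P0 P3 = k" "dist P1 P4 = l"
    using triple x \<open>l \<noteq> k\<close> by auto
  then have cm: "cayley_menger (l\<^sup>2) (k\<^sup>2) (l\<^sup>2) (l\<^sup>2) (k\<^sup>2) (l\<^sup>2) = 0"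
    "cayley_menger (l\<^sup>2) (k\<^sup>2) (k\<^sup>2) (l\<^sup>2) (l\<^sup>2) (k\<^sup>2) = 0"
    using pentagon_cayley_menger[of P1 P2 P3 P4] pentagon_cayley_menger[of P3 P4 P0 P1] x
    by simp_all
  have "K\<^sup>2 * (2 * L - K) = 0" "K\<^sup>2 * (3 * L - K) = 0"
    if "cayley_menger L K L L K L = 0" "cayley_menger L K K L L K = 0" for L K :: real
    using that unfolding cayley_menger_def by algebra+
  from this[OF cm] \<open>k > 0\<close> have "2 * l\<^sup>2 = k\<^sup>2" "3 * l\<^sup>2 = k\<^sup>2" by simp_all
  then have "l\<^sup>2 = 0" by linarith
  with \<open>l > 0\<close> show False by simp
qed

lemma C5_realisation_isosceles_two_base_sides:
  fixes P0 P1 P2 P3 P4 :: "real^2"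
  assumes R: "C5_realisation l l k P0 P1 P2 P3 P4" and "l \<noteq> k" "l > 0" "k > 0"
    and x: "dist P0 P1 = k" "dist P2 P3 = k"
  shows False
proof -
  note triple = C5_realisationD[OF R, unfolded has_sides_def perm3_isosceles_iff[OF \<open>l \<noteq> k\<close>]]
  have "dist P1 P2 = l" "dist P3 P4 = l" "dist P4 P0 = l"
    using triple x \<open>l \<noteq> k\<close> by auto
  moreover have "dist P2 P0 = l" "dist P3 P1 = l" "dist P4 P2 = l" "dist P0 P3 = k"
    "dist P1 P4 = l"
    using triple x calculation \<open>l \<noteq> k\<close> by auto
  ultimately have cm: "cayley_menger (l\<^sup>2) (l\<^sup>2) (l\<^sup>2) (k\<^sup>2) (l\<^sup>2) (l\<^sup>2) = 0"
    "cayley_menger (k\<^sup>2) (l\<^sup>2) (l\<^sup>2) (l\<^sup>2) (k\<^sup>2) (l\<^sup>2) = 0"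
    using pentagon_cayley_menger[of P1 P2 P3 P4] pentagon_cayley_menger[of P2 P3 P4 P0] x
    by simp_all
  have "K = 3 * L" "K\<^sup>2 - 4 * L * K + L\<^sup>2 = 0"
    if "cayley_menger L L L K L L = 0" "cayley_menger K L L L K L = 0" "L > 0" "K > 0"
    for L K :: real
  proof -
    have "L * K * (3 * L - K) = 0" "L * (K\<^sup>2 - 4 * L * K + L\<^sup>2) = 0"
      using that(1,2) unfolding cayley_menger_def by algebra+
    with that(3,4) show "K = 3 * L" "K\<^sup>2 - 4 * L * K + L\<^sup>2 = 0" by simp_all
  qed
  from this[OF cm] \<open>l > 0\<close> \<open>k > 0\<close> have "k\<^sup>2 = 3 * l\<^sup>2" "(k\<^sup>2)\<^sup>2 - 4 * l\<^sup>2 * k\<^sup>2 + (l\<^sup>2)\<^sup>2 = 0"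
    by simp_all
  then have "(l\<^sup>2)\<^sup>2 = 0" by algebra
  with \<open>l > 0\<close> show False by simp
qed

lemma C5_realisation_isosceles_side_ne_base:
  fixes P0 P1 P2 P3 P4 :: "real^2"
  assumes R: "C5_realisation l l k P0 P1 P2 P3 P4" and "l \<noteq> k" "l > 0" "k > 0"
  shows "dist P0 P1 \<noteq> k"
proof
  assume x0: "dist P0 P1 = k"
  note triple = C5_realisationD[OF R, unfolded has_sides_def perm3_isosceles_iff[OF \<open>l \<noteq> k\<close>]]
  have x1: "dist P1 P2 = l" using triple(1) x0 \<open>l \<noteq> k\<close> by auto
  have x4: "dist P4 P0 = l" using triple(5) x0 \<open>l \<noteq> k\<close> by auto
  consider "dist P2 P3 = l" "dist P3 P4 = l" | "dist P2 P3 = k" | "dist P3 P4 = k"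
    using triple(3) by auto
  then show False
  proof cases
    case 1
    from assms x0 x1 1 x4 show False by (rule C5_realisation_isosceles_one_base_side)
  next
    case 2
    from assms x0 2 show False by (rule C5_realisation_isosceles_two_base_sides)
  next
    case 3
    note C5_realisation_rotate[OF C5_realisation_rotate[OF C5_realisation_rotate[OF R]]]
    from this assms(2-4) 3 x0 show False by (rule C5_realisation_isosceles_two_base_sides)
  qed
qed

lemma C5_realisation_isosceles_golden:
  fixes P0 P1 P2 P3 P4 :: "real^2"
  assumes R: "C5_realisation l l k P0 P1 P2 P3 P4" and "l \<noteq> k" "l > 0" "k > 0"
  shows "k^4 - 3 * l\<^sup>2 * k\<^sup>2 + l^4 = 0"
proof -
  have R1: "C5_realisation l l k P1 P2 P3 P4 P0" using R by (rule C5_realisation_rotate)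
  have R2: "C5_realisation l l k P2 P3 P4 P0 P1" using R1 by (rule C5_realisation_rotate)
  have R3: "C5_realisation l l k P3 P4 P0 P1 P2" using R2 by (rule C5_realisation_rotate)
  have R4: "C5_realisation l l k P4 P0 P1 P2 P3" using R3 by (rule C5_realisation_rotate)
  note triple = C5_realisationD[OF R, unfolded has_sides_def perm3_isosceles_iff[OF \<open>l \<noteq> k\<close>]]
  have "dist P0 P1 \<noteq> k" "dist P1 P2 \<noteq> k" "dist P2 P3 \<noteq> k" "dist P3 P4 \<noteq> k" "dist P4 P0 \<noteq> k"
    using C5_realisation_isosceles_side_ne_base assms(2-4) R R1 R2 R3 R4 by blast+
  then have x: "dist P0 P1 = l" "dist P1 P2 = l" "dist P2 P3 = l" "dist P3 P4 = l" "dist P4 P0 = l"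
    using triple by auto
  then have "dist P2 P0 = k" "dist P3 P1 = k" "dist P0 P3 = k"
    using triple \<open>l \<noteq> k\<close> by auto
  with x have cm: "cayley_menger (l\<^sup>2) (k\<^sup>2) (k\<^sup>2) (l\<^sup>2) (k\<^sup>2) (l\<^sup>2) = 0"
    using pentagon_cayley_menger[of P0 P1 P2 P3] by simp
  have "(L + K) * (K\<^sup>2 - 3 * L * K + L\<^sup>2) = 0" if "cayley_menger L K K L K L = 0" for L K :: real
    using that unfolding cayley_menger_def by algebra
  from this[OF cm] \<open>l > 0\<close> have "(k\<^sup>2)\<^sup>2 - 3 * l\<^sup>2 * k\<^sup>2 + (l\<^sup>2)\<^sup>2 = 0"
    by (simp add: add_pos_pos)
  then show ?thesis by (simp add: power_mult[symmetric])
qed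

text \<open>In a proper 3-colouring of the 5-cycle some colour is used only once, since each colour
  class is an independent set and so has at most two elements.\<close>

lemma C5_three_colouring_unique_colour:
  assumes "x0 \<in> {a, b, c}" "x1 \<in> {a, b, c}" "x2 \<in> {a, b, c}" "x3 \<in> {a, b, c}" "x4 \<in> {a, b, c}"
    and "x0 \<noteq> x1" "x1 \<noteq> x2" "x2 \<noteq> x3" "x3 \<noteq> x4" "x4 \<noteq> x0"
  shows "(x0 \<noteq> x2 \<and> x0 \<noteq> x3) \<or> (x1 \<noteq> x3 \<and> x1 \<noteq> x4) \<or> (x2 \<noteq> x4 \<and> x2 \<noteq> x0) \<or>
    (x3 \<noteq> x0 \<and> x3 \<noteq> x1) \<or> (x4 \<noteq> x1 \<and> x4 \<noteq> x2)"
  using assms by auto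

lemma perm3_mem: "perm3 x y z a b c \<Longrightarrow> x \<in> {a, b, c}"
  unfolding perm3_def by auto

lemma perm3_scalene_distinct:
  "perm3 x y z a b c \<Longrightarrow> a \<noteq> b \<Longrightarrow> b \<noteq> c \<Longrightarrow> a \<noteq> c \<Longrightarrow> x \<noteq> y \<and> y \<noteq> z \<and> x \<noteq> z"
  unfolding perm3_def by auto

lemma perm3_exhaust: "perm3 x y z a b c \<Longrightarrow> t \<in> {a, b, c} \<Longrightarrow> t = x \<or> t = y \<or> t = z"
  unfolding perm3_def by auto

lemma C5_realisation_scalene_unique_side:
  fixes P0 P1 P2 P3 P4 :: "real^2"
  assumes R: "C5_realisation a b c P0 P1 P2 P3 P4" and abc: "a \<noteq> b" "b \<noteq> c" "a \<noteq> c"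
    and pos: "a > 0" "b > 0" "c > 0"
    and unique: "dist P0 P1 \<noteq> dist P2 P3" "dist P0 P1 \<noteq> dist P3 P4"
  shows False
proof -
  note triple = C5_realisationD[OF R, unfolded has_sides_def]
  note distinct = triple[THEN perm3_scalene_distinct, OF abc]
  note exhaust = triple[THEN perm3_exhaust]
  have mem: "dist P0 P1 \<in> {a, b, c}" "dist P2 P3 \<in> {a, b, c}" "dist P3 P4 \<in> {a, b, c}"
    "dist P4 P0 \<in> {a, b, c}" "dist P1 P2 \<in> {a, b, c}"
    using triple[THEN perm3_mem] by simp_all
  define w u v where "w = dist P0 P1" and "u = dist P1 P2" and "v = dist P2 P3"
  \<comment> \<open>The sides are forced to be \<open>w u v u v\<close> and the diagonals \<open>v w w w u\<close>.\<close>
  have y1: "dist P3 P1 = w" using exhaust(2)[OF mem(1)] distinct unique by (auto simp: w_def)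
  have x3: "dist P3 P4 = u" using exhaust(2)[OF mem(3)] distinct unique y1 by (auto simp: w_def u_def)
  have x4: "dist P4 P0 = v"
    using exhaust(2)[OF mem(4)] distinct y1 x3 by (auto simp: w_def u_def v_def)
  have y: "dist P2 P0 = v" "dist P4 P2 = w" "dist P0 P3 = w" "dist P1 P4 = u"
    using exhaust(1)[OF mem(2)] exhaust(3)[OF mem(1)] exhaust(4)[OF mem(1)] exhaust(5)[OF mem(5)]
      distinct unique x3 x4 by (auto simp: w_def u_def v_def)
  have cm: "cayley_menger (u\<^sup>2) (w\<^sup>2) (w\<^sup>2) (v\<^sup>2) (u\<^sup>2) (w\<^sup>2) = 0"
    "cayley_menger (v\<^sup>2) (u\<^sup>2) (w\<^sup>2) (w\<^sup>2) (v\<^sup>2) (u\<^sup>2) = 0"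
    using pentagon_cayley_menger[of P3 P4 P0 P1] pentagon_cayley_menger[of P4 P0 P1 P2] x3 x4 y y1
    unfolding w_def u_def v_def by simp_all
  have cm_consequence: "W\<^sup>2 * (V - W) = 0"
    if "cayley_menger U W W V U W = 0" "cayley_menger V U W W V U = 0" for U V W :: real
    using that unfolding cayley_menger_def by algebra
  have "w > 0" using mem(1) pos unfolding w_def by auto
  with cm_consequence[OF cm] have "v\<^sup>2 = w\<^sup>2" by simp
  moreover have "v \<noteq> w" using unique unfolding w_def v_def by auto
  ultimately show False unfolding w_def v_def by (simp add: power2_eq_iff_nonneg)
qed

lemma C5_realisation_not_scalene:
  fixes P0 P1 P2 P3 P4 :: "real^2"
  assumes R: "C5_realisation a b c P0 P1 P2 P3 P4" and abc: "a \<noteq> b" "b \<noteq> c" "a \<noteq> c"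
    and pos: "a > 0" "b > 0" "c > 0"
  shows False
proof -
  have R1: "C5_realisation a b c P1 P2 P3 P4 P0" using R by (rule C5_realisation_rotate)
  have R2: "C5_realisation a b c P2 P3 P4 P0 P1" using R1 by (rule C5_realisation_rotate)
  have R3: "C5_realisation a b c P3 P4 P0 P1 P2" using R2 by (rule C5_realisation_rotate)
  have R4: "C5_realisation a b c P4 P0 P1 P2 P3" using R3 by (rule C5_realisation_rotate)
  note triple = C5_realisationD[OF R, unfolded has_sides_def]
  have "dist P0 P1 \<in> {a, b, c}" "dist P1 P2 \<in> {a, b, c}" "dist P2 P3 \<in> {a, b, c}"
    "dist P3 P4 \<in> {a, b, c}" "dist P4 P0 \<in> {a, b, c}"
    using triple[THEN perm3_mem] by simp_all
  moreover have "dist P0 P1 \<noteq> dist P1 P2" "dist P1 P2 \<noteq> dist P2 P3" "dist P2 P3 \<noteq> dist P3 P4"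
    "dist P3 P4 \<noteq> dist P4 P0" "dist P4 P0 \<noteq> dist P0 P1"
    using triple[THEN perm3_scalene_distinct, OF abc] by auto
  ultimately have "(dist P0 P1 \<noteq> dist P2 P3 \<and> dist P0 P1 \<noteq> dist P3 P4) \<or>
    (dist P1 P2 \<noteq> dist P3 P4 \<and> dist P1 P2 \<noteq> dist P4 P0) \<or>
    (dist P2 P3 \<noteq> dist P4 P0 \<and> dist P2 P3 \<noteq> dist P0 P1) \<or>
    (dist P3 P4 \<noteq> dist P0 P1 \<and> dist P3 P4 \<noteq> dist P1 P2) \<or>
    (dist P4 P0 \<noteq> dist P1 P2 \<and> dist P4 P0 \<noteq> dist P2 P3)"
    by (rule C5_three_colouring_unique_colour)
  then show False
    using C5_realisation_scalene_unique_side[OF R abc pos]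
      C5_realisation_scalene_unique_side[OF R1 abc pos]
      C5_realisation_scalene_unique_side[OF R2 abc pos]
      C5_realisation_scalene_unique_side[OF R3 abc pos]
      C5_realisation_scalene_unique_side[OF R4 abc pos]
    by blast
qed

lemma C5_realisation_golden:
  fixes P0 P1 P2 P3 P4 :: "real^2"
  assumes R: "C5_realisation a b c P0 P1 P2 P3 P4" and pos: "a > 0" "b > 0" "c > 0"
  shows "\<exists>l k. l > 0 \<and> k > 0 \<and> k^4 - 3 * l\<^sup>2 * k\<^sup>2 + l^4 = 0 \<and> perm3 a b c l l k"
proof -
  consider "a = b" "b = c" | l k where "l \<noteq> k" "perm3 a b c l l k" | "a \<noteq> b" "b \<noteq> c" "a \<noteq> c"
    unfolding perm3_def by metis
  then show ?thesis
  proof cases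
    case 1
    then have "perm3 x y z a a a \<longleftrightarrow> x = a \<and> y = a \<and> z = a" for x y z
      unfolding perm3_def by auto
    with C5_realisationD[OF R] 1 have "dist P0 P1 = a" "dist P0 P2 = a" "dist P0 P3 = a"
      "dist P1 P2 = a" "dist P1 P3 = a" "dist P2 P3 = a"
      unfolding has_sides_def by (simp_all add: dist_commute)
    with \<open>a > 0\<close> show ?thesis by (metis no_planar_equidistant_four_points)
  next
    case (2 l k)
    then have "l > 0" "k > 0" using pos unfolding perm3_def by auto
    moreover have "C5_realisation l l k P0 P1 P2 P3 P4"
      using R C5_realisation_perm3[OF \<open>perm3 a b c l l k\<close>] by blast
    ultimately show ?thesis using 2 C5_realisation_isosceles_golden by blast
  next
    case 3
    with R pos show ?thesis by (metis C5_realisation_not_scalene)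
  qed
qed

section \<open>Golden triangles\<close>

definition golden_ratio :: real where
  "golden_ratio = (1 + sqrt 5) / 2"

lemma golden_ratio_gt_1: "golden_ratio > 1"
proof -
  have "1 < sqrt (5::real)" by (simp add: real_less_rsqrt)
  then show ?thesis unfolding golden_ratio_def by simp
qed

lemma golden_ratio_squared: "golden_ratio\<^sup>2 = golden_ratio + 1"
  unfolding golden_ratio_def by (simp add: power2_eq_square field_simps)

lemma golden_ratio_cases:
  assumes "l > 0" "k > 0" "k^4 - 3 * l\<^sup>2 * k\<^sup>2 + l^4 = 0"
  shows "k = golden_ratio * l \<or> l = golden_ratio * k"
proof -
  let ?\<phi> = golden_ratio
  have "k^4 - 3 * l\<^sup>2 * k\<^sup>2 + l^4 =
      - ((k - ?\<phi> * l) * (k + (?\<phi> - 1) * l)) * ((l - ?\<phi> * k) * (l + (?\<phi> - 1) * k))"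
    using golden_ratio_squared by algebra
  moreover have "k + (?\<phi> - 1) * l > 0" "l + (?\<phi> - 1) * k > 0"
    using assms golden_ratio_gt_1 by (simp_all add: add_pos_pos)
  ultimately show ?thesis using assms(3) by auto
qed

lemma cos_pi_div_5: "cos (pi / 5) = golden_ratio / 2"
proof -
  define c where "c = cos (pi / 5)"
  have "cos (3 * (pi / 5)) = - cos (2 * (pi / 5))"
    using cos_pi_minus[of "2 * (pi / 5)"] by simp
  then have "4 * c^3 - 3 * c = - (2 * c\<^sup>2 - 1)"
    unfolding c_def cos_treble_cos cos_double_cos .
  then have "(c + 1) * ((2 * c)\<^sup>2 - 2 * c - 1) = 0" by algebra
  moreover have "c > 0" unfolding c_def by (rule cos_gt_zero) (use pi_gt_zero in auto)
  ultimately have "(2 * c)\<^sup>2 - 2 * c - 1 = 0" by simp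
  then have "(2 * c - golden_ratio) * (2 * c + golden_ratio - 1) = 0"
    using golden_ratio_squared by algebra
  moreover have "2 * c + golden_ratio - 1 > 0" using \<open>c > 0\<close> golden_ratio_gt_1 by simp
  ultimately show ?thesis unfolding c_def by simp
qed

lemma cos_2pi_div_5: "cos (2 * pi / 5) = (golden_ratio - 1) / 2"
proof -
  have "cos (2 * (pi / 5)) = 2 * (golden_ratio / 2)\<^sup>2 - 1"
    unfolding cos_double_cos cos_pi_div_5 ..
  then show ?thesis using golden_ratio_squared by (simp add: power_divide)
qed

lemma cos_3pi_div_5: "cos (3 * pi / 5) = (1 - golden_ratio) / 2"
  using cos_pi_minus[of "2 * pi / 5"] cos_2pi_div_5 by (simp add: field_simps)

definition angle_of_sides :: "real \<Rightarrow> real \<Rightarrow> real \<Rightarrow> real" where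
  "angle_of_sides p q r = arccos ((p\<^sup>2 + q\<^sup>2 - r\<^sup>2) / (2 * p * q)) * 180 / pi"

lemma angle_deg_law_of_cosines:
  "angle_deg X Y Z = angle_of_sides (dist X Y) (dist Z Y) (dist X Z)"
proof -
  have "(dist X Z)\<^sup>2 = (dist X Y)\<^sup>2 + (dist Z Y)\<^sup>2 - 2 * ((X - Y) \<bullet> (Z - Y))"
    unfolding dist_norm power2_norm_eq_inner
    by (simp add: inner_diff_left inner_diff_right inner_commute)
  then have inner: "(X - Y) \<bullet> (Z - Y) = ((dist X Y)\<^sup>2 + (dist Z Y)\<^sup>2 - (dist X Z)\<^sup>2) / 2"
    by simp
  show ?thesis
    unfolding angle_deg_def angle_of_sides_def inner by (simp add: dist_norm mult.assoc)
qed

lemma tri_type_iff_angle_of_sides: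
  "tri_type (A, B, C) \<alpha> \<beta> \<gamma> \<longleftrightarrow>
     {# angle_of_sides (dist C A) (dist A B) (dist B C),
        angle_of_sides (dist A B) (dist B C) (dist C A),
        angle_of_sides (dist B C) (dist C A) (dist A B) #} = {# \<alpha>, \<beta>, \<gamma> #}"
  unfolding tri_type_def angle_deg_law_of_cosines by (simp add: dist_commute)

lemma angle_of_sides_commute: "angle_of_sides p q r = angle_of_sides q p r"
  unfolding angle_of_sides_def by (simp add: ac_simps)

lemma angles_perm3_isosceles:
  "perm3 a b c l l k \<Longrightarrow>
     {# angle_of_sides b c a, angle_of_sides c a b, angle_of_sides a b c #} =
     {# angle_of_sides l l k, angle_of_sides l k l, angle_of_sides k l l #}"
  unfolding perm3_def by (auto simp: angle_of_sides_commute add_mset_commute)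

lemma arccos_golden_ratio:
  "arccos (golden_ratio / 2) = pi / 5"
  "arccos ((golden_ratio - 1) / 2) = 2 * pi / 5"
  "arccos ((1 - golden_ratio) / 2) = 3 * pi / 5"
  unfolding cos_pi_div_5[symmetric] cos_2pi_div_5[symmetric] cos_3pi_div_5[symmetric]
  by (simp_all add: arccos_cos)

lemma golden_gnomon_angles:
  assumes "l > 0"
  shows "angle_of_sides l l (golden_ratio * l) = 108"
    "angle_of_sides l (golden_ratio * l) l = 36" "angle_of_sides (golden_ratio * l) l l = 36"
proof -
  have "(l\<^sup>2 + l\<^sup>2 - (golden_ratio * l)\<^sup>2) / (2 * l * l) = (2 - golden_ratio\<^sup>2) / 2"
    using assms by (simp add: power_mult_distrib field_simps power2_eq_square)
  also have "\<dots> = (1 - golden_ratio) / 2" unfolding golden_ratio_squared by simp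
  finally have cos_apex: "(l\<^sup>2 + l\<^sup>2 - (golden_ratio * l)\<^sup>2) / (2 * l * l) = (1 - golden_ratio) / 2" .
  then show "angle_of_sides l l (golden_ratio * l) = 108"
    unfolding angle_of_sides_def cos_apex arccos_golden_ratio by simp
  have cos_base: "(l\<^sup>2 + (golden_ratio * l)\<^sup>2 - l\<^sup>2) / (2 * l * (golden_ratio * l)) = golden_ratio / 2"
    using assms golden_ratio_gt_1 by (simp add: power_mult_distrib field_simps power2_eq_square)
  show "angle_of_sides l (golden_ratio * l) l = 36"
    unfolding angle_of_sides_def cos_base arccos_golden_ratio by simp
  then show "angle_of_sides (golden_ratio * l) l l = 36"
    by (simp add: angle_of_sides_commute)
qed

lemma golden_triangle_angles:
  assumes "k > 0"
  shows "angle_of_sides (golden_ratio * k) (golden_ratio * k) k = 36"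
    "angle_of_sides (golden_ratio * k) k (golden_ratio * k) = 72"
    "angle_of_sides k (golden_ratio * k) (golden_ratio * k) = 72"
proof -
  have "golden_ratio > 0" using golden_ratio_gt_1 by simp
  have "((golden_ratio * k)\<^sup>2 + (golden_ratio * k)\<^sup>2 - k\<^sup>2) / (2 * (golden_ratio * k) * (golden_ratio * k))
      = (2 * golden_ratio\<^sup>2 - 1) / (2 * golden_ratio\<^sup>2)"
    using assms \<open>golden_ratio > 0\<close> by (simp add: power_mult_distrib field_simps power2_eq_square)
  also have "\<dots> = golden_ratio / 2"
    using \<open>golden_ratio > 0\<close> golden_ratio_squared by (simp add: field_simps power2_eq_square)
  finally have cos_apex: "((golden_ratio * k)\<^sup>2 + (golden_ratio * k)\<^sup>2 - k\<^sup>2) /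
      (2 * (golden_ratio * k) * (golden_ratio * k)) = golden_ratio / 2" .
  then show "angle_of_sides (golden_ratio * k) (golden_ratio * k) k = 36"
    unfolding angle_of_sides_def cos_apex arccos_golden_ratio by simp
  have "((golden_ratio * k)\<^sup>2 + k\<^sup>2 - (golden_ratio * k)\<^sup>2) / (2 * (golden_ratio * k) * k)
      = 1 / (2 * golden_ratio)"
    using assms \<open>golden_ratio > 0\<close> by (simp add: power_mult_distrib field_simps power2_eq_square)
  also have "\<dots> = (golden_ratio - 1) / 2"
    using \<open>golden_ratio > 0\<close> golden_ratio_squared by (simp add: field_simps power2_eq_square)
  finally have cos_base: "((golden_ratio * k)\<^sup>2 + k\<^sup>2 - (golden_ratio * k)\<^sup>2) /
      (2 * (golden_ratio * k) * k) = (golden_ratio - 1) / 2" .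
  show "angle_of_sides (golden_ratio * k) k (golden_ratio * k) = 72"
    unfolding angle_of_sides_def cos_base arccos_golden_ratio by simp
  then show "angle_of_sides k (golden_ratio * k) (golden_ratio * k) = 72"
    by (simp add: angle_of_sides_commute)
qed

lemma tri_type_golden:
  assumes "l > 0" "k > 0" "k^4 - 3 * l\<^sup>2 * k\<^sup>2 + l^4 = 0"
    and "perm3 (dist B C) (dist C A) (dist A B) l l k"
  shows "tri_type (A, B, C) 108 36 36 \<or> tri_type (A, B, C) 72 72 36"
proof -
  have angles: "tri_type (A, B, C) \<alpha> \<beta> \<gamma> \<longleftrightarrow>
    {# angle_of_sides l l k, angle_of_sides l k l, angle_of_sides k l l #} = {# \<alpha>, \<beta>, \<gamma> #}"
    for \<alpha> \<beta> \<gamma>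
    unfolding tri_type_iff_angle_of_sides angles_perm3_isosceles[OF assms(4)] ..
  from golden_ratio_cases[OF assms(1-3)] show ?thesis
  proof
    assume "k = golden_ratio * l"
    then have "tri_type (A, B, C) 108 36 36"
      unfolding angles by (simp add: golden_gnomon_angles[OF \<open>l > 0\<close>])
    then show ?thesis ..
  next
    assume "l = golden_ratio * k"
    then have "tri_type (A, B, C) 72 72 36"
      unfolding angles
      by (simp add: golden_triangle_angles[OF \<open>k > 0\<close>] add_mset_commute)
    then show ?thesis ..
  qed
qed

lemma C5_realisation_tri_type:
  fixes P0 P1 P2 P3 P4 :: "real^2"
  assumes "C5_realisation (dist B C) (dist C A) (dist A B) P0 P1 P2 P3 P4"
    and "dist B C > 0" "dist C A > 0" "dist A B > 0"
  shows "tri_type (A, B, C) 108 36 36 \<or> tri_type (A, B, C) 72 72 36"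
proof -
  obtain l k where "l > 0" "k > 0" "k^4 - 3 * l\<^sup>2 * k\<^sup>2 + l^4 = 0"
    "perm3 (dist B C) (dist C A) (dist A B) l l k"
    using C5_realisation_golden assms by blast
  then show ?thesis by (rule tri_type_golden)
qed

section \<open>Approximate realisations\<close>

definition side_defect :: "real \<Rightarrow> real \<Rightarrow> real \<Rightarrow> 'a::metric_space \<Rightarrow> 'a \<Rightarrow> 'a \<Rightarrow> real" where
  "side_defect a b c u v w = max \<bar>dist v w - a\<bar> (max \<bar>dist w u - b\<bar> \<bar>dist u v - c\<bar>)"

definition congruence_defect :: "real \<Rightarrow> real \<Rightarrow> real \<Rightarrow> 'a::metric_space \<Rightarrow> 'a \<Rightarrow> 'a \<Rightarrow> real" where
  "congruence_defect a b c u v w =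
     min (side_defect a b c u v w) (min (side_defect a c b u v w) (min (side_defect b a c u v w)
       (min (side_defect b c a u v w) (min (side_defect c a b u v w) (side_defect c b a u v w)))))"

lemma side_defect_le:
  fixes u v w A B C :: "'a::metric_space"
  assumes "dist u A \<le> \<delta>" "dist v B \<le> \<delta>" "dist w C \<le> \<delta>"
  shows "side_defect (dist B C) (dist C A) (dist A B) u v w \<le> 2 * \<delta>"
proof -
  have "\<bar>dist p q - dist p' q'\<bar> \<le> dist p p' + dist q q'" for p q p' q' :: 'a
    using dist_triangle2[of p q p'] dist_triangle2[of q p' q'] dist_triangle3[of p' q' p]
      dist_triangle[of p q' q] by arith
  with assms show ?thesis
    unfolding side_defect_def by (smt (verit) dist_commute)
qed

lemma congruence_defect_le_iff:
  "congruence_defect a b c u v w \<le> \<delta> \<longleftrightarrow>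
     (\<exists>a' b' c'. perm3 a' b' c' a b c \<and> side_defect a' b' c' u v w \<le> \<delta>)"
  unfolding congruence_defect_def perm3_def min_le_iff_disj by blast

lemma has_sides_if_congruence_defect_nonpos:
  assumes "congruence_defect a b c u v w \<le> 0"
  shows "has_sides u v w a b c"
proof -
  obtain a' b' c' where perm: "perm3 a' b' c' a b c" and sd: "side_defect a' b' c' u v w \<le> 0"
    using assms unfolding congruence_defect_le_iff by blast
  from sd have "dist v w = a'" "dist w u = b'" "dist u v = c'"
    unfolding side_defect_def by auto
  with perm show ?thesis unfolding has_sides_def by simp
qed

lemma dist_le_if_congruence_defect_le:
  assumes "congruence_defect a b c u v w \<le> \<delta>"
  shows "dist u v \<le> max a (max b c) + \<delta>" "dist v w \<le> max a (max b c) + \<delta>"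
    "dist w u \<le> max a (max b c) + \<delta>"
proof -
  obtain a' b' c' where perm: "perm3 a' b' c' a b c" and sd: "side_defect a' b' c' u v w \<le> \<delta>"
    using assms unfolding congruence_defect_le_iff by blast
  from perm have "a' \<le> max a (max b c)" "b' \<le> max a (max b c)" "c' \<le> max a (max b c)"
    unfolding perm3_def by auto
  moreover from sd have "dist v w \<le> a' + \<delta>" "dist w u \<le> b' + \<delta>" "dist u v \<le> c' + \<delta>"
    unfolding side_defect_def by (simp_all add: abs_le_iff)
  ultimately show "dist u v \<le> max a (max b c) + \<delta>" "dist v w \<le> max a (max b c) + \<delta>"
    "dist w u \<le> max a (max b c) + \<delta>"
    by linarith+
qed

lemma congruence_defect_translate:
  fixes u v w t :: "'a::real_normed_vector"
  shows "congruence_defect a b c (u - t) (v - t) (w - t) = congruence_defect a b c u v w"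
proof -
  have "dist (p - t) (q - t) = dist p q" for p q :: 'a by (simp add: dist_norm)
  then show ?thesis by (simp only: congruence_defect_def side_defect_def)
qed

lemma continuous_on_congruence_defect [continuous_intros]:
  "continuous_on S f \<Longrightarrow> continuous_on S g \<Longrightarrow> continuous_on S h \<Longrightarrow>
    continuous_on S (\<lambda>x. congruence_defect a b c (f x) (g x) (h x))"
  unfolding congruence_defect_def side_defect_def by (intro continuous_intros)

definition C5_defect ::
    "real \<Rightarrow> real \<Rightarrow> real \<Rightarrow> 'a::metric_space \<Rightarrow> 'a \<Rightarrow> 'a \<Rightarrow> 'a \<Rightarrow> 'a \<Rightarrow> real" where
  "C5_defect a b c P0 P1 P2 P3 P4 =
     max (congruence_defect a b c P0 P1 P2) (max (congruence_defect a b c P1 P2 P3)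
       (max (congruence_defect a b c P2 P3 P4) (max (congruence_defect a b c P3 P4 P0)
         (congruence_defect a b c P4 P0 P1))))"

lemma C5_realisation_if_C5_defect_nonpos:
  "C5_defect a b c P0 P1 P2 P3 P4 \<le> 0 \<Longrightarrow> C5_realisation a b c P0 P1 P2 P3 P4"
  unfolding C5_defect_def C5_realisation_def by (simp add: has_sides_if_congruence_defect_nonpos)

lemma C5_defect_translate:
  fixes P0 P1 P2 P3 P4 t :: "'a::real_normed_vector"
  shows "C5_defect a b c (P0 - t) (P1 - t) (P2 - t) (P3 - t) (P4 - t) = C5_defect a b c P0 P1 P2 P3 P4"
  unfolding C5_defect_def congruence_defect_translate ..

lemma C5_defect_bounded_below:
  fixes a b c :: real
  assumes no_realisation:
    "\<And>P0 P1 P2 P3 P4 :: 'a::{real_normed_vector, heine_borel}.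
       \<not> C5_realisation a b c P0 P1 P2 P3 P4"
  shows "\<exists>\<delta>>0. \<forall>P0 P1 P2 P3 P4 :: 'a. \<delta> \<le> C5_defect a b c P0 P1 P2 P3 P4"
proof -
  \<comment> \<open>Configurations with defect at most 1 and \<open>P\<^sub>0 = 0\<close> lie in \<open>K\<close>.\<close>
  define r where "r = \<bar>a\<bar> + \<bar>b\<bar> + \<bar>c\<bar> + 1"
  define K :: "('a \<times> 'a \<times> 'a \<times> 'a) set"
    where "K = cball 0 r \<times> cball 0 r \<times> cball 0 r \<times> cball 0 r"
  define F where "F q = C5_defect a b c 0 (fst q) (fst (snd q)) (fst (snd (snd q))) (snd (snd (snd q)))"
    for q :: "'a \<times> 'a \<times> 'a \<times> 'a"
  have "compact K" unfolding K_def by (intro compact_Times compact_cball)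
  moreover have "K \<noteq> {}" unfolding K_def r_def by simp
  moreover have "continuous_on K F"
    unfolding F_def C5_defect_def by (intro continuous_intros)
  ultimately obtain q0 where q0_min: "\<And>q. q \<in> K \<Longrightarrow> F q0 \<le> F q"
    by (metis continuous_attains_inf)
  have "F q0 > 0"
  proof (rule ccontr)
    assume "\<not> F q0 > 0"
    then have "C5_realisation a b c 0 (fst q0) (fst (snd q0)) (fst (snd (snd q0))) (snd (snd (snd q0)))"
      unfolding F_def by (intro C5_realisation_if_C5_defect_nonpos) simp
    with no_realisation show False by blast
  qed
  define \<delta> where "\<delta> = min 1 (F q0)"
  have "\<delta> \<le> C5_defect a b c P0 P1 P2 P3 P4" for P0 P1 P2 P3 P4 :: 'a
  proof (rule ccontr)
    assume "\<not> ?thesis"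
    then have small: "C5_defect a b c P0 P1 P2 P3 P4 \<le> 1" "C5_defect a b c P0 P1 P2 P3 P4 < F q0"
      unfolding \<delta>_def by auto
    define q where "q = (P1 - P0, P2 - P0, P3 - P0, P4 - P0)"
    have "F q = C5_defect a b c (P0 - P0) (P1 - P0) (P2 - P0) (P3 - P0) (P4 - P0)"
      unfolding F_def q_def by simp
    also have "\<dots> = C5_defect a b c P0 P1 P2 P3 P4" by (rule C5_defect_translate)
    finally have "F q = C5_defect a b c P0 P1 P2 P3 P4" .
    moreover have "q \<in> K"
    proof -
      have "congruence_defect a b c P0 P1 P2 \<le> 1" "congruence_defect a b c P3 P4 P0 \<le> 1"
        using small(1) unfolding C5_defect_def by simp_all
      then have "dist P0 P1 \<le> max a (max b c) + 1" "dist P2 P0 \<le> max a (max b c) + 1"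
        "dist P4 P0 \<le> max a (max b c) + 1" "dist P0 P3 \<le> max a (max b c) + 1"
        by (simp_all add: dist_le_if_congruence_defect_le)
      moreover have "max a (max b c) + 1 \<le> r" unfolding r_def by linarith
      ultimately show ?thesis
        unfolding K_def q_def by (simp add: dist_norm norm_minus_commute)
    qed
    ultimately show False using q0_min[of q] small(2) by simp
  qed
  moreover have "\<delta> > 0" unfolding \<delta>_def using \<open>F q0 > 0\<close> by simp
  ultimately show ?thesis by blast
qed

lemma set3_eq_cases:
  assumes "{x, y, z} = {u, v, w}" "card {x, y, z} = 3"
  shows "(u = x \<and> v = y \<and> w = z) \<or> (u = x \<and> v = z \<and> w = y) \<or> (u = y \<and> v = x \<and> w = z) \<or>
    (u = y \<and> v = z \<and> w = x) \<or> (u = z \<and> v = x \<and> w = y) \<or> (u = z \<and> v = y \<and> w = x)"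
proof -
  have "x \<noteq> y" "y \<noteq> z" "x \<noteq> z"
    using assms(2) by (auto simp: card_insert_if split: if_splits)
  moreover have "u \<in> {x, y, z}" "v \<in> {x, y, z}" "w \<in> {x, y, z}"
    "x \<in> {u, v, w}" "y \<in> {u, v, w}" "z \<in> {u, v, w}"
    using assms(1) by blast+
  ultimately show ?thesis by auto
qed

lemma congruent_swap:
  "congruent A B C T \<Longrightarrow> congruent B A C T"
  "congruent A B C T \<Longrightarrow> congruent A C B T"
  unfolding congruent_def by (auto simp: insert_commute split: prod.splits)

lemma eps_congruent_swap:
  "eps_congruent T \<epsilon> y x z \<longleftrightarrow> eps_congruent T \<epsilon> x y z"
  "eps_congruent T \<epsilon> x z y \<longleftrightarrow> eps_congruent T \<epsilon> x y z"
  unfolding eps_congruent_def by (metis congruent_swap)+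

lemma eps_congruent_if_HTP_edge:
  assumes "{u, v, w} \<in> HTP T P \<epsilon>"
  shows "eps_congruent T \<epsilon> u v w"
proof -
  obtain x y z where "{x, y, z} = {u, v, w}" "card {x, y, z} = 3" "eps_congruent T \<epsilon> x y z"
    using assms unfolding HTP_def by auto
  from set3_eq_cases[OF this(1,2)] this(3) show ?thesis
    by (elim disjE conjE) (simp_all add: eps_congruent_swap)
qed

lemma congruent_has_sides:
  assumes "congruent A B C (X, Y, Z)" "X \<noteq> Y" "Y \<noteq> Z" "X \<noteq> Z"
  shows "has_sides A B C (dist Y Z) (dist Z X) (dist X Y)"
proof -
  obtain f :: "real^2 \<Rightarrow> real^2" where iso: "\<And>u v. dist (f u) (f v) = dist u v"
    and img: "{f X, f Y, f Z} = {A, B, C}"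
    using assms(1) unfolding congruent_def by auto
  have "f X \<noteq> f Y" "f Y \<noteq> f Z" "f X \<noteq> f Z"
    using assms(2-4) iso by (metis dist_eq_0_iff)+
  then have "card {f X, f Y, f Z} = 3" by simp
  from set3_eq_cases[OF img this] show ?thesis
    unfolding has_sides_def by (elim disjE conjE) (simp_all add: perm3_def iso dist_commute)
qed

lemma eps_congruent_congruence_defect:
  assumes "eps_congruent (X, Y, Z) \<epsilon> u v w" "X \<noteq> Y" "Y \<noteq> Z" "X \<noteq> Z"
  shows "congruence_defect (dist Y Z) (dist Z X) (dist X Y) u v w \<le> 2 * (\<epsilon> * min_side (X, Y, Z))"
proof -
  obtain A B C where "congruent A B C (X, Y, Z)"
    and "dist u A \<le> \<epsilon> * min_side (X, Y, Z)" "dist v B \<le> \<epsilon> * min_side (X, Y, Z)"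
      "dist w C \<le> \<epsilon> * min_side (X, Y, Z)"
    using assms(1) unfolding eps_congruent_def by blast
  then have "perm3 (dist B C) (dist C A) (dist A B) (dist Y Z) (dist Z X) (dist X Y)"
    and "side_defect (dist B C) (dist C A) (dist A B) u v w \<le> 2 * (\<epsilon> * min_side (X, Y, Z))"
    using congruent_has_sides assms(2-4) side_defect_le unfolding has_sides_def by blast+
  then show ?thesis unfolding congruence_defect_le_iff by blast
qed

lemma C5_defect_le_if_contains_copy:
  assumes "contains_copy C5_vertices C5_edges P (HTP (X, Y, Z) P \<epsilon>)" "X \<noteq> Y" "Y \<noteq> Z" "X \<noteq> Z"
  shows "\<exists>p1 p2 p3 p4 p5 :: pt.
    C5_defect (dist Y Z) (dist Z X) (dist X Y) p1 p2 p3 p4 p5 \<le> 2 * (\<epsilon> * min_side (X, Y, Z))"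
proof -
  obtain f where edges: "\<forall>e\<in>C5_edges. f ` e \<in> HTP (X, Y, Z) P \<epsilon>"
    using assms(1) unfolding contains_copy_def by blast
  have "{f 1, f 2, f 3} \<in> HTP (X, Y, Z) P \<epsilon>" "{f 2, f 3, f 4} \<in> HTP (X, Y, Z) P \<epsilon>"
    "{f 3, f 4, f 5} \<in> HTP (X, Y, Z) P \<epsilon>" "{f 4, f 5, f 1} \<in> HTP (X, Y, Z) P \<epsilon>"
    "{f 5, f 1, f 2} \<in> HTP (X, Y, Z) P \<epsilon>"
    using edges unfolding C5_edges_def by (simp_all add: insert_commute)
  then have "C5_defect (dist Y Z) (dist Z X) (dist X Y) (f 1) (f 2) (f 3) (f 4) (f 5)
      \<le> 2 * (\<epsilon> * min_side (X, Y, Z))"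
    unfolding C5_defect_def
    using eps_congruent_congruence_defect[OF eps_congruent_if_HTP_edge assms(2-4)] by simp
  then show ?thesis by blast
qed

theorem lemma2p10:
  fixes T :: triangle
  assumes "is_triangle T"
    and "\<not> tri_type T 108 36 36"
    and "\<not> tri_type T 72 72 36"
    and "\<not> tri_type T 120 30 30"
  shows "forbidden_for C5_vertices C5_edges T"
proof -
  obtain A B C where T: "T = (A, B, C)" by (metis prod_cases3)
  have "A \<noteq> B" "B \<noteq> C" "A \<noteq> C"
    using assms(1) unfolding T is_triangle_def by (auto simp: collinear_2 insert_commute)
  then have sides: "dist B C > 0" "dist C A > 0" "dist A B > 0" by auto
  have "\<not> C5_realisation (dist B C) (dist C A) (dist A B) P0 P1 P2 P3 P4" for P0 P1 P2 P3 P4 :: pt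
    using C5_realisation_tri_type[OF _ sides] assms(2,3) unfolding T by blast
  then obtain \<delta> where "\<delta> > 0"
    and gap: "\<And>P0 P1 P2 P3 P4 :: pt. \<delta> \<le> C5_defect (dist B C) (dist C A) (dist A B) P0 P1 P2 P3 P4"
    using C5_defect_bounded_below by blast
  have "min_side T > 0" using sides unfolding T min_side_def by simp
  define \<epsilon> where "\<epsilon> = \<delta> / (4 * min_side T)"
  have "\<epsilon> > 0" and small: "2 * (\<epsilon> * min_side T) < \<delta>"
    using \<open>\<delta> > 0\<close> \<open>min_side T > 0\<close> unfolding \<epsilon>_def by (simp_all add: field_simps)
  show ?thesis
    unfolding forbidden_for_def
  proof (intro exI[of _ \<epsilon>] conjI allI impI notI \<open>\<epsilon> > 0\<close>)
    fix P assume "contains_copy C5_vertices C5_edges P (HTP T P \<epsilon>)"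
    from C5_defect_le_if_contains_copy[OF this[unfolded T] \<open>A \<noteq> B\<close> \<open>B \<noteq> C\<close> \<open>A \<noteq> C\<close>]
    obtain p1 p2 p3 p4 p5 :: pt where
      "C5_defect (dist B C) (dist C A) (dist A B) p1 p2 p3 p4 p5 \<le> 2 * (\<epsilon> * min_side T)"
      unfolding T by blast
    with gap[of p1 p2 p3 p4 p5] small show False by linarith
  qed
qed

end
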